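(* Let $f$, $g$, $\xi$, $F$ satisfy the standing assumptions below, and let $x$ be the unique continuous solution of $x'(t)=-f(x(t))+g(t)$, $t>0$, $x(0)=\xi$. Suppose there exist $\delta>0$ and a function $\phi$ increasing on $(0,\delta)$ with $\lim_{x\to0^+}f(x)/\phi(x)=1$, and suppose there is $L\in(0,\infty)$ with \[ \lim_{t\to\infty}\frac{g(t)}{f(F^{-1}(t))}=L. \] Then $x(t)\to0$ as $t\to\infty$. Moreover: (i) if $f\in\mathrm{RV}_0(\beta)$ for some $\beta>1$, then $\lim_{t\to\infty}F(x(t))/t=\Lambda_*$, where $\Lambda_*\in(0,1)$ is the unique solution of $(1-\Lambda_* )\Lambda_*^{-\beta/(\beta-1)}=L$; (ii) if $f\circ F^{-1}\in\mathrm{RV}_\infty(-1)$ and $F^{-1}\in\mathrm{RV}_\infty(0)$, then $\lim_{t\to\infty}F(x(t))/t=\Lambda_*=1/(L+1)\in(0,1)$.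
   Context: Standing assumptions: $f\in C(\mathbb{R};\mathbb{R})$ is locally Lipschitz continuous on $\mathbb{R}$, $f(0)=0$ and $xf(x)>0$ for $x\neq0$; $g\in C([0,\infty);\mathbb{R})$ with $g(t)>0$ for $t>0$; $\xi>0$. $F(x)=\int_x^1 \frac{du}{f(u)}$ for $x>0$, with $\lim_{x\to0^+}F(x)=+\infty$; $F^{-1}$ is the inverse of the strictly decreasing function $F$. A measurable $\varphi:(0,\infty)\to(0,\infty)$ is in $\mathrm{RV}_0(\beta)$ if $\lim_{x\to0^+}\varphi(\lambda x)/\varphi(x)=\lambda^\beta$ for all $\lambda>0$ (applied to $f$ restricted to $(0,\infty)$, where $f>0$). A measurable positive $h$ is in $\mathrm{RV}_\infty(\alpha)$ if $\lim_{t\to\infty}h(\lambda t)/h(t)=\lambda^\alpha$ for all $\lambda>0$. *)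

theory Defs
  imports "HOL-Analysis.Analysis"
begin

definition Fint :: "(real \<Rightarrow> real) \<Rightarrow> real \<Rightarrow> real" where
  "Fint f x = (if x \<le> 1 then integral {x..1} (\<lambda>u. 1 / f u)
               else - integral {1..x} (\<lambda>u. 1 / f u))"

definition Finv :: "(real \<Rightarrow> real) \<Rightarrow> real \<Rightarrow> real" where
  "Finv f t = (THE y. y > 0 \<and> Fint f y = t)"

definition loc_lipschitz :: "(real \<Rightarrow> real) \<Rightarrow> bool" where
  "loc_lipschitz f \<longleftrightarrow> (\<forall>x. \<exists>U. open U \<and> x \<in> U \<and> (\<exists>C. C-lipschitz_on U f))"

definition RV0 :: "(real \<Rightarrow> real) \<Rightarrow> real \<Rightarrow> bool" where
  "RV0 \<phi> \<beta> \<longleftrightarrow> (\<forall>x>0. \<phi> x > 0) \<and>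
     (\<forall>c>0. ((\<lambda>x. \<phi> (c * x) / \<phi> x) \<longlongrightarrow> c powr \<beta>) (at_right 0))"

definition RVinf :: "(real \<Rightarrow> real) \<Rightarrow> real \<Rightarrow> bool" where
  "RVinf h \<alpha> \<longleftrightarrow> (\<forall>\<^sub>F t in at_top. h t > 0) \<and>
     (\<forall>c>0. ((\<lambda>t. h (c * t) / h t) \<longlongrightarrow> c powr \<alpha>) at_top)"

end

theory Submission
  imports Defs
begin

text \<open>
  Along the solution put \<open>y(t) = F(x(t))\<close>, so that \<open>y' = 1 - g(t)/f(x(t))\<close>, and let
  \<open>h(t) = f(F\<^sup>-\<^sup>1(t))\<close>. If \<open>h\<close> is regularly varying with index \<open>-\<rho>\<close>, compare \<open>y(t)\<close> with \<open>\<mu>t\<close>: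
  whenever \<open>y(t) \<ge> \<mu>t\<close> we have \<open>x(t) \<le> F\<^sup>-\<^sup>1(\<mu>t)\<close>, so, \<open>f\<close> being asymptotic to an increasing
  function, \<open>g(t)/f(x(t))\<close> is at least about \<open>g(t)/h(\<mu>t) \<rightarrow> L\<mu>\<^sup>\<rho>\<close>. Hence \<open>(y - \<mu>t)' < 0\<close> there
  as soon as \<open>\<mu> + L\<mu>\<^sup>\<rho> > 1\<close>, and \<open>y - \<mu>t\<close> eventually stays negative; symmetrically for
  \<open>\<mu> + L\<mu>\<^sup>\<rho> < 1\<close>. So \<open>y(t)/t\<close> tends to the root \<open>\<Lambda>\<close> of \<open>\<Lambda> + L\<Lambda>\<^sup>\<rho> = 1\<close>.
  In case (i), \<open>f \<in> RV\<^sub>0(\<beta>)\<close> makes \<open>F \<in> RV\<^sub>0(1 - \<beta>)\<close> (l'Hospital), hence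
  \<open>F\<^sup>-\<^sup>1 \<in> RV\<^sub>\<infinity>(-1/(\<beta>-1))\<close> and \<open>h \<in> RV\<^sub>\<infinity>(-\<beta>/(\<beta>-1))\<close>; in case (ii) \<open>\<rho> = 1\<close>.
\<close>

lemma exists_first_nonneg:
  fixes w :: "real \<Rightarrow> real"
  assumes cont: "continuous_on {a..b} w" and "w a < 0" and "w b \<ge> 0" and "a \<le> b"
  shows "\<exists>s. a < s \<and> s \<le> b \<and> w s \<ge> 0 \<and> (\<forall>t. a \<le> t \<and> t < s \<longrightarrow> w t < 0)"
proof -
  define S where "S = {t \<in> {a..b}. 0 \<le> w t}"
  have "closed S" unfolding S_def
    by (rule continuous_on_closed_Collect_le[OF continuous_on_const cont]) simp
  moreover have "S \<noteq> {}" and bdd: "bdd_below S"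
    using assms by (auto simp: S_def intro: bdd_belowI[of _ a])
  ultimately have sS: "Inf S \<in> S" by (intro closed_contains_Inf)
  have "w t < 0" if "a \<le> t" "t < Inf S" for t
    using cInf_lower[OF _ bdd, of t] that sS by (force simp: S_def)
  moreover have "a \<noteq> Inf S" using sS \<open>w a < 0\<close> by (auto simp: S_def)
  ultimately show ?thesis using sS by (intro exI[of _ "Inf S"]) (auto simp: S_def)
qed

lemma negative_persists:
  fixes w :: "real \<Rightarrow> real"
  assumes cont: "continuous_on {a..b} w" and "a \<le> b" and "w a < 0"
    and decr: "\<And>s. a < s \<Longrightarrow> s \<le> b \<Longrightarrow> w s \<ge> 0 \<Longrightarrow> \<exists>D<0. (w has_real_derivative D) (at s)"
  shows "w b < 0"
proof (rule ccontr)
  assume "\<not> w b < 0"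
  then obtain s where s: "a < s" "s \<le> b" "w s \<ge> 0" "\<And>t. a \<le> t \<Longrightarrow> t < s \<Longrightarrow> w t < 0"
    using exists_first_nonneg[OF cont \<open>w a < 0\<close>] \<open>a \<le> b\<close> by force
  obtain D where "D < 0" "(w has_real_derivative D) (at s)" using decr s by blast
  then obtain d where d: "d > 0" "\<And>h. h > 0 \<Longrightarrow> h < d \<Longrightarrow> w s < w (s - h)"
    using DERIV_neg_dec_left by blast
  define h where "h = min d (s - a) / 2"
  have "h > 0" "h < d" "h \<le> s - a" using d s by (auto simp: h_def)
  then show False using d(2)[of h] s(3) s(4)[of "s - h"] by auto
qed

lemma eventually_negative_barrier:
  fixes w w' :: "real \<Rightarrow> real"
  assumes "c > 0"
    and der: "\<And>t. t \<ge> T \<Longrightarrow> (w has_real_derivative w' t) (at t)"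
    and decr: "\<And>t. t \<ge> T \<Longrightarrow> w t \<ge> 0 \<Longrightarrow> w' t \<le> -c"
  shows "eventually (\<lambda>t. w t < 0) at_top"
proof -
  have "\<exists>t\<^sub>0\<ge>T. w t\<^sub>0 < 0"
  proof (rule ccontr)
    assume "\<not> ?thesis"
    then have nonneg: "\<And>t. t \<ge> T \<Longrightarrow> w t \<ge> 0" by force
    define t where "t = T + (\<bar>w T\<bar> + 1) / c"
    have "T \<le> t" using \<open>c > 0\<close> by (simp add: t_def)
    have "w t + c * t \<le> w T + c * T"
    proof (rule DERIV_nonpos_imp_nonincreasing[OF \<open>T \<le> t\<close>])
      fix u assume "T \<le> u"
      then show "\<exists>y. ((\<lambda>t. w t + c * t) has_real_derivative y) (at u) \<and> y \<le> 0"
        using decr[of u] nonneg[of u] der[of u]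
        by (intro exI[of _ "w' u + c"]) (auto intro!: derivative_eq_intros)
    qed
    moreover have "c * (t - T) = \<bar>w T\<bar> + 1" using \<open>c > 0\<close> by (simp add: t_def)
    ultimately show False using nonneg[OF \<open>T \<le> t\<close>] by (simp add: algebra_simps)
  qed
  then obtain t\<^sub>0 where t\<^sub>0: "t\<^sub>0 \<ge> T" "w t\<^sub>0 < 0" by blast
  have "w t < 0" if "t \<ge> t\<^sub>0" for t
  proof (rule negative_persists[where a=t\<^sub>0 and b=t and w=w])
    show "continuous_on {t\<^sub>0..t} w"
    proof (intro continuous_at_imp_continuous_on ballI)
      fix u assume "u \<in> {t\<^sub>0..t}"
      then show "isCont w u" using der[of u] t\<^sub>0 by (auto intro: DERIV_isCont)
    qed
    show "t\<^sub>0 \<le> t" "w t\<^sub>0 < 0" using that t\<^sub>0 by auto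
    show "\<exists>D<0. (w has_real_derivative D) (at s)" if "t\<^sub>0 < s" "w s \<ge> 0" for s
      using that t\<^sub>0 der[of s] decr[of s] \<open>c > 0\<close> by (intro exI[of _ "w' s"]) auto
  qed
  then show ?thesis by (auto simp: eventually_at_top_linorder)
qed

definition quasi_increasing_at_0 :: "(real \<Rightarrow> real) \<Rightarrow> bool" where
  "quasi_increasing_at_0 f \<longleftrightarrow>
     (\<forall>K>1. \<exists>d>0. \<forall>a b. 0 < a \<longrightarrow> a \<le> b \<longrightarrow> b < d \<longrightarrow> f a \<le> K * f b)"

lemma quasi_increasing_at_0D:
  assumes "quasi_increasing_at_0 f" "K > 1"
  obtains d where "d > 0" "\<And>a b. 0 < a \<Longrightarrow> a \<le> b \<Longrightarrow> b < d \<Longrightarrow> f a \<le> K * f b"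
  using assms unfolding quasi_increasing_at_0_def by blast

lemma quasi_increasing_at_0_if_asymp_increasing:
  assumes "\<delta> > 0" and mono: "mono_on {0<..<\<delta>} \<phi>"
    and lim: "((\<lambda>y. f y / \<phi> y) \<longlongrightarrow> 1) (at_right 0)"
    and pos: "\<And>y. y > 0 \<Longrightarrow> f y > 0"
  shows "quasi_increasing_at_0 f"
  unfolding quasi_increasing_at_0_def
proof (intro allI impI)
  fix K :: real assume "K > 1"
  define k where "k = sqrt K"
  have k: "k > 1" "k * k = K" using \<open>K > 1\<close> by (auto simp: k_def)
  have "eventually (\<lambda>y. 1 / k < f y / \<phi> y \<and> f y / \<phi> y < k) (at_right 0)"
    using order_tendstoD[OF lim, of "1 / k"] order_tendstoD[OF lim, of k] k
    by (auto elim: eventually_elim2)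
  then obtain b where b: "b > 0" "\<And>y. 0 < y \<Longrightarrow> y < b \<Longrightarrow> 1 / k < f y / \<phi> y \<and> f y / \<phi> y < k"
    by (auto simp: eventually_at_right_field)
  have bounds: "f y < k * \<phi> y \<and> \<phi> y < k * f y" if "0 < y" "y < b" for y
  proof -
    have "\<phi> y > 0"
    proof (rule ccontr)
      assume "\<not> \<phi> y > 0"
      then have "f y / \<phi> y \<le> 0" using pos[OF that(1)] by (simp add: divide_nonneg_nonpos)
      then show False using b(2)[OF that] k by (smt (verit) divide_pos_pos)
    qed
    then show ?thesis using b(2)[OF that] k by (simp add: field_simps)
  qed
  have "f a \<le> K * f b'" if "0 < a" "a \<le> b'" "b' < min b \<delta>" for a b'
  proof -
    have "\<phi> a \<le> \<phi> b'" using mono_onD[OF mono, of a b'] that by auto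
    then have "f a < k * (k * f b')"
      using bounds[of a] bounds[of b'] that k by (smt (verit) mult_left_mono)
    then show ?thesis using k by (simp add: mult.assoc[symmetric])
  qed
  moreover have "min b \<delta> > 0" using b \<open>\<delta> > 0\<close> by simp
  ultimately show "\<exists>d>0. \<forall>a b. 0 < a \<longrightarrow> a \<le> b \<longrightarrow> b < d \<longrightarrow> f a \<le> K * f b" by blast
qed

lemma RV0_ratio_compose_less:
  fixes u v :: "'a \<Rightarrow> real"
  assumes qi: "quasi_increasing_at_0 f" and RV: "RV0 f \<beta>"
    and u: "filterlim u (at_right 0) F" and v: "filterlim v (at_right 0) F"
    and uv: "((\<lambda>t. u t / v t) \<longlongrightarrow> \<kappa>) F" and "\<kappa> > 0" and "\<kappa> powr \<beta> < a"
  shows "eventually (\<lambda>t. f (u t) / f (v t) < a) F"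
proof -
  have "((\<lambda>s. s powr \<beta>) \<longlongrightarrow> \<kappa> powr \<beta>) (at_right \<kappa>)"
    using \<open>\<kappa> > 0\<close> by (intro tendsto_intros) auto
  from order_tendstoD(2)[OF this \<open>\<kappa> powr \<beta> < a\<close>] obtain e where
    e: "e > \<kappa>" "\<And>s. \<kappa> < s \<Longrightarrow> s < e \<Longrightarrow> s powr \<beta> < a"
    by (auto simp: eventually_at_right_field)
  define s where "s = (\<kappa> + e) / 2"
  have s: "s > \<kappa>" "s > 0" "s powr \<beta> < a" using e \<open>\<kappa> > 0\<close> by (auto simp: s_def)
  then have "0 < s powr \<beta>" "0 < a" by (simp, smt (verit) powr_gt_zero)
  define K where "K = sqrt (a / s powr \<beta>)"
  have K: "K > 1" "K * K * s powr \<beta> = a" using s \<open>0 < s powr \<beta>\<close> \<open>0 < a\<close> by (auto simp: K_def)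
  obtain d where d: "d > 0" "\<And>a b. 0 < a \<Longrightarrow> a \<le> b \<Longrightarrow> b < d \<Longrightarrow> f a \<le> K * f b"
    using quasi_increasing_at_0D[OF qi K(1)] by blast
  have fpos: "\<And>y. y > 0 \<Longrightarrow> f y > 0" using RV by (simp add: RV0_def)
  have "((\<lambda>y. f (s * y) / f y) \<longlongrightarrow> s powr \<beta>) (at_right 0)"
    using RV s by (simp add: RV0_def)
  from filterlim_compose[OF this v]
  have "eventually (\<lambda>t. f (s * v t) / f (v t) < K * s powr \<beta>) F"
    using K s by (intro order_tendstoD) auto
  moreover have "eventually (\<lambda>t. u t / v t < s) F" using uv s(1) by (rule order_tendstoD)
  moreover have "eventually (\<lambda>t. s * v t < d) F"
  proof -
    have "((\<lambda>t. s * v t) \<longlongrightarrow> s * 0) F" using v by (intro tendsto_intros) (simp add: filterlim_at)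
    then show ?thesis using d by (intro order_tendstoD) auto
  qed
  moreover have "eventually (\<lambda>t. u t > 0) F" "eventually (\<lambda>t. v t > 0) F"
    using u v by (auto simp: filterlim_at elim: eventually_mono)
  ultimately show ?thesis
  proof eventually_elim
    case (elim t)
    then have "f (u t) \<le> K * f (s * v t)"
      using d(2)[of "u t" "s * v t"] by (simp add: divide_less_eq)
    also have "\<dots> < K * (K * s powr \<beta> * f (v t))"
      using elim K fpos[of "v t"] by (simp add: divide_less_eq)
    also have "\<dots> = a * f (v t)" using K(2) by (simp add: algebra_simps)
    finally show ?case using fpos[of "v t"] elim by (simp add: divide_less_eq)
  qed
qed

lemma RV0_ratio_compose:
  fixes u v :: "'a \<Rightarrow> real"
  assumes qi: "quasi_increasing_at_0 f" and RV: "RV0 f \<beta>"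
    and u: "filterlim u (at_right 0) F" and v: "filterlim v (at_right 0) F"
    and uv: "((\<lambda>t. u t / v t) \<longlongrightarrow> \<kappa>) F" and "\<kappa> > 0"
  shows "((\<lambda>t. f (u t) / f (v t)) \<longlongrightarrow> \<kappa> powr \<beta>) F"
proof (rule order_tendstoI)
  show "eventually (\<lambda>t. f (u t) / f (v t) < a) F" if "\<kappa> powr \<beta> < a" for a
    by (rule RV0_ratio_compose_less[OF assms that])
next
  fix a assume a: "a < \<kappa> powr \<beta>"
  have fpos: "\<And>y. y > 0 \<Longrightarrow> f y > 0" using RV by (simp add: RV0_def)
  have pos: "eventually (\<lambda>t. u t > 0 \<and> v t > 0) F"
    using u v by (auto simp: filterlim_at elim: eventually_elim2)
  show "eventually (\<lambda>t. a < f (u t) / f (v t)) F"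
  proof (cases "a > 0")
    case False
    from pos show ?thesis
      by eventually_elim (use False fpos in \<open>smt (verit) divide_pos_pos\<close>)
  next
    case True
    \<comment> \<open>The lower bound is the upper bound with the roles of \<open>u\<close> and \<open>v\<close> exchanged.\<close>
    have "((\<lambda>t. v t / u t) \<longlongrightarrow> inverse \<kappa>) F"
      using tendsto_inverse[OF uv] \<open>\<kappa> > 0\<close> by simp
    moreover have "inverse \<kappa> powr \<beta> < inverse a"
      using a True \<open>\<kappa> > 0\<close> by (simp add: inverse_powr)
    ultimately have "eventually (\<lambda>t. f (v t) / f (u t) < inverse a) F"
      using \<open>\<kappa> > 0\<close> by (intro RV0_ratio_compose_less[OF qi RV v u]) auto
    with pos show ?thesis
    proof eventually_elim
      case (elim t)
      then show ?case using fpos[of "u t"] fpos[of "v t"] True by (simp add: field_simps)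
    qed
  qed
qed

lemma Lambda_equation_iff:
  fixes \<Lambda> \<rho> L :: real
  assumes "\<Lambda> > 0"
  shows "(1 - \<Lambda>) * \<Lambda> powr (- \<rho>) = L \<longleftrightarrow> \<Lambda> + L * \<Lambda> powr \<rho> = 1"
  using assms by (auto simp: powr_minus field_simps)

lemma ex1_Lambda:
  fixes \<rho> L :: real
  assumes "L > 0" "\<rho> > 0"
  shows "\<exists>!\<Lambda>. 0 < \<Lambda> \<and> \<Lambda> < 1 \<and> (1 - \<Lambda>) * \<Lambda> powr (- \<rho>) = L"
proof -
  define q where "q z = z + L * z powr \<rho>" for z
  have strict: "q z < q z'" if "0 \<le> z" "z < z'" for z z'
    using powr_less_mono2[OF \<open>\<rho> > 0\<close> that] \<open>L > 0\<close> that
    by (auto simp: q_def intro!: add_strict_mono)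
  have "continuous_on {0..1} q"
    unfolding q_def using \<open>\<rho> > 0\<close> by (intro continuous_intros continuous_on_powr') auto
  moreover have "q 0 \<le> 1" "1 \<le> q 1" using \<open>L > 0\<close> by (auto simp: q_def)
  ultimately obtain z where z: "0 \<le> z" "z \<le> 1" "q z = 1" using IVT'[of q 0 1 1] by auto
  have "z \<noteq> 0" "z \<noteq> 1" using z \<open>L > 0\<close> by (auto simp: q_def)
  with z have z': "0 < z" "z < 1" by auto
  have eq: "0 < w \<and> w < 1 \<and> (1 - w) * w powr (- \<rho>) = L \<longleftrightarrow> 0 < w \<and> w < 1 \<and> q w = 1" for w
    using Lambda_equation_iff[of w \<rho> L] by (auto simp: q_def)
  show ?thesis unfolding eq
  proof (rule ex1I[of _ z])
    show "0 < z \<and> z < 1 \<and> q z = 1" using z z' by simp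
    show "w = z" if "0 < w \<and> w < 1 \<and> q w = 1" for w
      using that z' z(3) strict[of w z] strict[of z w] by (cases w z rule: linorder_cases) auto
  qed
qed

locale restoring_force =
  fixes f :: "real \<Rightarrow> real"
  assumes f_cont: "continuous_on UNIV f"
    and f0: "f 0 = 0"
    and f_sign: "\<And>y. y \<noteq> 0 \<Longrightarrow> y * f y > 0"
    and Fint_at_right_0: "filterlim (Fint f) at_top (at_right 0)"
begin

lemma f_pos: "y > 0 \<Longrightarrow> f y > 0"
  using f_sign[of y] by (simp add: zero_less_mult_iff)

lemma f_neg: "y < 0 \<Longrightarrow> f y < 0"
  using f_sign[of y] by (simp add: zero_less_mult_iff)

lemma continuous_on_inverse_f:
  assumes "0 < a"
  shows "continuous_on {a..b} (\<lambda>u. 1 / f u)"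
proof -
  have "f u \<noteq> 0" if "u \<in> {a..b}" for u using that assms f_pos[of u] by auto
  then show ?thesis by (intro continuous_intros continuous_on_subset[OF f_cont]) auto
qed

lemma Fint_split:
  assumes "0 < a" "a \<le> y"
  shows "Fint f y = Fint f a - integral {a..y} (\<lambda>u. 1 / f u)"
proof -
  have combine: "integral {p..q} (\<lambda>u. 1 / f u) + integral {q..r} (\<lambda>u. 1 / f u)
      = integral {p..r} (\<lambda>u. 1 / f u)" if "0 < p" "p \<le> q" "q \<le> r" for p q r
    using that by (intro Henstock_Kurzweil_Integration.integral_combine
        integrable_continuous_real continuous_on_inverse_f) auto
  show ?thesis
    using assms combine[of a y 1] combine[of a 1 y] combine[of 1 a y] by (auto simp: Fint_def)
qed

lemma Fint_has_derivative:
  assumes "y > 0"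
  shows "(Fint f has_real_derivative - (1 / f y)) (at y)"
proof -
  have ab: "0 < y / 2" "y / 2 < y" "y < 2 * y" using assms by auto
  have "((\<lambda>z. integral {y / 2..z} (\<lambda>u. 1 / f u)) has_real_derivative 1 / f y) (at y)"
    using integral_has_real_derivative[OF continuous_on_inverse_f[of "y / 2" "2 * y"], of y] ab
    by (simp add: at_within_Icc_at)
  then have "((\<lambda>z. Fint f (y / 2) - integral {y / 2..z} (\<lambda>u. 1 / f u))
      has_real_derivative - (1 / f y)) (at y)"
    by (intro derivative_eq_intros) auto
  then show ?thesis
    by (rule has_field_derivative_transform_within_open[where S="{y / 2<..<2 * y}"])
       (use ab in \<open>auto intro: Fint_split[symmetric]\<close>)
qed

lemma Fint_less_iff:
  assumes "0 < y" "0 < z"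
  shows "Fint f z < Fint f y \<longleftrightarrow> y < z"
proof -
  have decr: "Fint f q < Fint f p" if "0 < p" "p < q" for p q
  proof (rule DERIV_neg_imp_decreasing[OF that(2)])
    fix u assume "p \<le> u"
    then show "\<exists>d. (Fint f has_real_derivative d) (at u) \<and> d < 0"
      using Fint_has_derivative[of u] f_pos[of u] that by force
  qed
  show ?thesis using decr[of y z] decr[of z y] assms by (cases y z rule: linorder_cases) auto
qed

lemma Fint_eq_iff: "0 < y \<Longrightarrow> 0 < z \<Longrightarrow> Fint f z = Fint f y \<longleftrightarrow> y = z"
  using Fint_less_iff[of y z] Fint_less_iff[of z y] by (cases y z rule: linorder_cases) auto

lemma Fint_surj_nonneg:
  assumes "t \<ge> 0"
  shows "\<exists>y>0. Fint f y = t"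
proof -
  obtain b where b: "b > 0" "\<And>y. 0 < y \<Longrightarrow> y < b \<Longrightarrow> Fint f y > t"
    using Fint_at_right_0 by (auto simp: filterlim_at_top_dense eventually_at_right_field)
  define y\<^sub>0 where "y\<^sub>0 = min (b / 2) 1"
  have y\<^sub>0: "0 < y\<^sub>0" "y\<^sub>0 \<le> 1" "t < Fint f y\<^sub>0" using b by (auto simp: y\<^sub>0_def)
  moreover have "Fint f 1 = 0" by (simp add: Fint_def)
  ultimately have "\<exists>y. y\<^sub>0 \<le> y \<and> y \<le> 1 \<and> Fint f y = t"
    using assms by (intro IVT2) (auto intro!: DERIV_isCont[OF Fint_has_derivative])
  with y\<^sub>0(1) show ?thesis by (metis less_le_trans)
qed

lemma Finv_Fint: "y > 0 \<Longrightarrow> Finv f (Fint f y) = y"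
  unfolding Finv_def by (rule the_equality) (auto simp: Fint_eq_iff)

lemma Finv_pos: "t \<ge> 0 \<Longrightarrow> Finv f t > 0"
  using Fint_surj_nonneg[of t] Finv_Fint by force

lemma Fint_Finv: "t \<ge> 0 \<Longrightarrow> Fint f (Finv f t) = t"
  using Fint_surj_nonneg[of t] Finv_Fint by force

lemma Finv_less_iff:
  assumes "0 \<le> s" "0 < y"
  shows "Finv f s < y \<longleftrightarrow> Fint f y < s"
  using Fint_less_iff[of "Finv f s" y] Finv_pos[of s] Fint_Finv[of s] assms by simp

lemma Finv_antimono: "0 \<le> s \<Longrightarrow> s \<le> t \<Longrightarrow> Finv f t \<le> Finv f s"
  using Finv_less_iff[of t "Finv f s"] Finv_pos[of s] Fint_Finv[of s] by force

lemma Finv_at_top: "filterlim (Finv f) (at_right 0) at_top"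
proof -
  have "eventually (\<lambda>t. Finv f t < e) at_top" if "e > 0" for e
    using eventually_gt_at_top[of "max 0 (Fint f e)"]
    by eventually_elim (use that in \<open>auto simp: Finv_less_iff\<close>)
  moreover have "eventually (\<lambda>t. Finv f t > 0) at_top"
    using eventually_ge_at_top[of 0] by eventually_elim (rule Finv_pos)
  ultimately show ?thesis
    by (intro tendsto_imp_filterlim_at_right order_tendstoI) (auto elim: eventually_mono)
qed

lemma Finv_has_derivative:
  assumes "t > 0"
  shows "(Finv f has_real_derivative - f (Finv f t)) (at t)"
proof -
  let ?y = "Finv f t"
  have y: "?y > 0" using Finv_pos assms by auto
  have "isCont (Finv f) (Fint f ?y)"
    by (rule isCont_inverse_function2[where a="?y / 2" and b="?y + 1"])
       (use y in \<open>auto intro!: DERIV_isCont[OF Fint_has_derivative] Finv_Fint\<close>)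
  then have "(Finv f has_real_derivative inverse (- (1 / f ?y))) (at t)"
    using assms y f_pos[OF y] Fint_Finv
    by (intro DERIV_inverse_function[where a=0 and b="t + 1" and g="Finv f" and x=t,
          OF Fint_has_derivative[OF y]]) auto
  then show ?thesis using f_pos[OF y] by simp
qed

abbreviation h :: "real \<Rightarrow> real" where
  "h t \<equiv> f (Finv f t)"

lemma h_pos: "t \<ge> 0 \<Longrightarrow> h t > 0"
  using f_pos Finv_pos by blast

lemma h_tendsto_0: "(h \<longlongrightarrow> 0) at_top"
proof -
  have "isCont f 0" using f_cont by (simp add: continuous_on_eq_continuous_at)
  moreover have "(Finv f \<longlongrightarrow> 0) at_top" using Finv_at_top by (simp add: filterlim_at)
  ultimately show ?thesis using isCont_tendsto_compose[of 0 f] f0 by fastforce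
qed

lemma Finv_scaled_at_top:
  assumes "\<mu> > 0"
  shows "filterlim (\<lambda>t. Finv f (\<mu> * t)) (at_right 0) at_top"
proof -
  have "filterlim (\<lambda>t. \<mu> * t) at_top at_top"
    using assms by (intro filterlim_tendsto_pos_mult_at_top[OF tendsto_const] filterlim_ident)
  then show ?thesis by (rule filterlim_compose[OF Finv_at_top])
qed

lemma Fint_ratio_tendsto:
  assumes RV: "RV0 f \<beta>" and "\<kappa> > 0"
  shows "((\<lambda>s. Fint f (\<kappa> * s) / Fint f s) \<longlongrightarrow> \<kappa> powr (1 - \<beta>)) (at_right 0)"
proof (rule lhopital_right_0_at_top[where g'="\<lambda>s. - (1 / f s)"
      and f'="\<lambda>s. - (1 / f (\<kappa> * s)) * \<kappa>"])
  have pos: "eventually (\<lambda>s. s > 0) (at_right (0::real))" by (simp add: eventually_at_right_less)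
  show "filterlim (Fint f) at_top (at_right 0)" by (rule Fint_at_right_0)
  show "eventually (\<lambda>s. - (1 / f s) \<noteq> 0) (at_right 0)"
    using pos by eventually_elim (use f_pos in force)
  show "eventually (\<lambda>s. (Fint f has_real_derivative - (1 / f s)) (at s)) (at_right 0)"
    using pos by eventually_elim (rule Fint_has_derivative)
  show "eventually (\<lambda>s. ((\<lambda>s. Fint f (\<kappa> * s)) has_real_derivative - (1 / f (\<kappa> * s)) * \<kappa>) (at s))
      (at_right 0)"
    using pos
  proof eventually_elim
    case (elim s)
    then show ?case using \<open>\<kappa> > 0\<close> by (intro DERIV_chain2[OF Fint_has_derivative DERIV_cmult_Id]) simp
  qed
  have "((\<lambda>s. \<kappa> * inverse (f (\<kappa> * s) / f s)) \<longlongrightarrow> \<kappa> * inverse (\<kappa> powr \<beta>)) (at_right 0)"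
    using RV \<open>\<kappa> > 0\<close> unfolding RV0_def by (intro tendsto_intros) auto
  moreover have "\<kappa> * inverse (\<kappa> powr \<beta>) = \<kappa> powr (1 - \<beta>)"
    using \<open>\<kappa> > 0\<close> by (simp add: powr_diff divide_inverse)
  moreover have "eventually (\<lambda>s. \<kappa> * inverse (f (\<kappa> * s) / f s)
      = (- (1 / f (\<kappa> * s)) * \<kappa>) / (- (1 / f s))) (at_right 0)"
    using pos by eventually_elim (use f_pos[of "\<kappa> * _"] \<open>\<kappa> > 0\<close> in \<open>simp add: field_simps\<close>)
  ultimately show "((\<lambda>s. (- (1 / f (\<kappa> * s)) * \<kappa>) / (- (1 / f s))) \<longlongrightarrow> \<kappa> powr (1 - \<beta>)) (at_right 0)"
    using Lim_transform_eventually by fastforce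
qed

lemma Finv_ratio_tendsto:
  assumes "\<beta> > 1" and RV: "RV0 f \<beta>" and "\<mu> > 0"
  shows "((\<lambda>t. Finv f (\<mu> * t) / Finv f t) \<longlongrightarrow> \<mu> powr (- 1 / (\<beta> - 1))) at_top"
proof -
  define \<kappa> where "\<kappa> = \<mu> powr (- 1 / (\<beta> - 1))"
  have "\<kappa> > 0" using \<open>\<mu> > 0\<close> by (simp add: \<kappa>_def)
  have "- 1 / (\<beta> - 1) * (1 - \<beta>) = 1" using \<open>\<beta> > 1\<close> by (simp add: field_simps)
  then have \<kappa>_powr: "\<kappa> powr (1 - \<beta>) = \<mu>" using \<open>\<mu> > 0\<close> by (simp add: \<kappa>_def powr_powr)
  have less_iff: "Finv f (\<mu> * t) / Finv f t < a \<longleftrightarrow> Fint f (a * Finv f t) / t < \<mu>"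
    if "a > 0" "t > 0" for a t
    using Finv_less_iff[of "\<mu> * t" "a * Finv f t"] Finv_pos[of t] that \<open>\<mu> > 0\<close>
    by (simp add: divide_less_eq mult.commute)
  have lim: "((\<lambda>t. Fint f (a * Finv f t) / t) \<longlongrightarrow> a powr (1 - \<beta>)) at_top" if "a > 0" for a
  proof -
    have "((\<lambda>t. Fint f (a * Finv f t) / Fint f (Finv f t)) \<longlongrightarrow> a powr (1 - \<beta>)) at_top"
      using filterlim_compose[OF Fint_ratio_tendsto[OF RV that] Finv_at_top] by simp
    moreover have "eventually (\<lambda>t. Fint f (a * Finv f t) / Fint f (Finv f t)
        = Fint f (a * Finv f t) / t) at_top"
      using eventually_ge_at_top[of 0] by eventually_elim (simp add: Fint_Finv)
    ultimately show ?thesis by (rule Lim_transform_eventually)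
  qed
  have powr_less: "b powr (1 - \<beta>) < a powr (1 - \<beta>)" if "0 < a" "a < b" for a b
    using powr_less_mono2_neg[of "1 - \<beta>" a b] that \<open>\<beta> > 1\<close> by simp
  show ?thesis unfolding \<kappa>_def[symmetric]
  proof (rule order_tendstoI)
    fix a assume "a > \<kappa>"
    then have "a > 0" using \<open>\<kappa> > 0\<close> by simp
    have "eventually (\<lambda>t. Fint f (a * Finv f t) / t < \<mu>) at_top"
      using lim[OF \<open>a > 0\<close>] powr_less[OF \<open>\<kappa> > 0\<close> \<open>a > \<kappa>\<close>] \<kappa>_powr by (intro order_tendstoD) auto
    with eventually_gt_at_top[of 0] show "eventually (\<lambda>t. Finv f (\<mu> * t) / Finv f t < a) at_top"
      by eventually_elim (use less_iff \<open>a > 0\<close> in blast)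
  next
    fix a assume "a < \<kappa>"
    define b where "b = max (a / 2 + \<kappa> / 2) (\<kappa> / 2)"
    have b: "0 < b" "a < b" "b < \<kappa>" using \<open>a < \<kappa>\<close> \<open>\<kappa> > 0\<close> by (auto simp: b_def less_max_iff_disj)
    have "eventually (\<lambda>t. \<mu> < Fint f (b * Finv f t) / t) at_top"
      using lim[OF b(1)] powr_less[OF b(1,3)] \<kappa>_powr by (intro order_tendstoD) auto
    with eventually_gt_at_top[of 0] show "eventually (\<lambda>t. a < Finv f (\<mu> * t) / Finv f t) at_top"
      by eventually_elim (use less_iff[OF b(1)] b(2) in force)
  qed
qed

lemma h_ratio_tendsto:
  assumes "\<beta> > 1" and RV: "RV0 f \<beta>" and qi: "quasi_increasing_at_0 f" and "\<mu> > 0"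
  shows "((\<lambda>t. h (\<mu> * t) / h t) \<longlongrightarrow> \<mu> powr (- (\<beta> / (\<beta> - 1)))) at_top"
proof -
  have "(\<mu> powr (- 1 / (\<beta> - 1))) powr \<beta> = \<mu> powr (- (\<beta> / (\<beta> - 1)))"
    by (simp add: powr_powr)
  with RV0_ratio_compose[OF qi RV Finv_scaled_at_top[OF \<open>\<mu> > 0\<close>] Finv_at_top
      Finv_ratio_tendsto[OF \<open>\<beta> > 1\<close> RV \<open>\<mu> > 0\<close>]] \<open>\<mu> > 0\<close>
  show ?thesis by simp
qed

end

locale perturbed_decay = restoring_force f for f +
  fixes g x :: "real \<Rightarrow> real" and \<xi> L :: real
  assumes g_pos: "\<And>t. t > 0 \<Longrightarrow> g t > 0"
    and xi_pos: "\<xi> > 0"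
    and x_cont: "continuous_on {0..} x"
    and x_init: "x 0 = \<xi>"
    and x_ode: "\<And>t. t > 0 \<Longrightarrow> (x has_real_derivative (- f (x t) + g t)) (at t)"
    and f_quasi_increasing: "quasi_increasing_at_0 f"
    and L_pos: "L > 0"
    and g_lim: "((\<lambda>t. g t / h t) \<longlongrightarrow> L) at_top"
begin

lemma x_pos:
  assumes "t \<ge> 0"
  shows "x t > 0"
proof -
  have "- x t < 0"
  proof (rule negative_persists[where a=0 and b=t and w="\<lambda>s. - x s"])
    show "continuous_on {0..t} (\<lambda>s. - x s)"
      by (intro continuous_intros continuous_on_subset[OF x_cont]) auto
    show "0 \<le> t" "- x 0 < 0" using assms x_init xi_pos by auto
    show "\<exists>D<0. ((\<lambda>s. - x s) has_real_derivative D) (at s)" if "0 < s" "- x s \<ge> 0" for s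
    proof -
      have "f (x s) \<le> 0" using that f0 f_neg[of "x s"] by (cases "x s = 0") auto
      then show ?thesis using g_pos[OF that(1)] DERIV_minus[OF x_ode[OF that(1)]]
        by (intro exI[of _ "f (x s) - g s"]) auto
    qed
  qed
  then show ?thesis by simp
qed

lemma g_eventually_le_h: "eventually (\<lambda>t. g t \<le> (L + 1) * h t) at_top"
proof -
  have "eventually (\<lambda>t. g t / h t < L + 1) at_top" using g_lim by (rule order_tendstoD) simp
  with eventually_ge_at_top[of 0] show ?thesis
    by eventually_elim (use h_pos in \<open>auto simp: divide_less_eq\<close>)
qed

lemma x_eventually_bounded: "\<exists>M. eventually (\<lambda>t. x t \<le> M) at_top"
proof -
  have "eventually (\<lambda>t. t > 0 \<and> g t \<le> (L + 1) * h t) at_top"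
    using eventually_gt_at_top[of 0] g_eventually_le_h by eventually_elim auto
  then obtain T where T: "\<And>t. t \<ge> T \<Longrightarrow> t > 0 \<and> g t \<le> (L + 1) * h t"
    by (auto simp: eventually_at_top_linorder)
  \<comment> \<open>\<open>(L + 1) Finv f\<close> absorbs the forcing term: \<open>x + (L + 1) Finv f\<close> is nonincreasing after \<open>T\<close>.\<close>
  define z where "z t = x t + (L + 1) * Finv f t" for t
  have "x t \<le> z T" if "t \<ge> T" for t
  proof -
    have "z t \<le> z T"
    proof (rule DERIV_nonpos_imp_nonincreasing[OF that])
      fix u assume u: "T \<le> u"
      then have "u > 0" using T by simp
      have "(z has_real_derivative (- f (x u) + g u) + (L + 1) * (- h u)) (at u)"
        unfolding z_def using x_ode Finv_has_derivative \<open>u > 0\<close>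
        by (intro DERIV_add DERIV_cmult) auto
      moreover have "(- f (x u) + g u) + (L + 1) * (- h u) \<le> 0"
        using T[OF u] f_pos[OF x_pos[of u]] by simp
      ultimately show "\<exists>y. (z has_real_derivative y) (at u) \<and> y \<le> 0" by blast
    qed
    moreover have "x t \<le> z t" using Finv_pos[of t] T[OF that] L_pos by (simp add: z_def)
    ultimately show ?thesis by simp
  qed
  then show ?thesis by (auto simp: eventually_at_top_linorder)
qed

lemma x_tendsto_0: "(x \<longlongrightarrow> 0) at_top"
proof (rule order_tendstoI)
  show "eventually (\<lambda>t. a < x t) at_top" if "a < 0" for a
    using eventually_ge_at_top[of 0] by eventually_elim (use x_pos that in force)
next
  fix a :: real assume "0 < a"
  obtain M where M: "eventually (\<lambda>t. x t \<le> M) at_top" using x_eventually_bounded by blast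
  obtain p where p: "p \<in> {a..max a M}" "\<And>y. y \<in> {a..max a M} \<Longrightarrow> f p \<le> f y"
    using continuous_attains_inf[of "{a..max a M}" f] continuous_on_subset[OF f_cont] by auto
  have "f p > 0" using p \<open>0 < a\<close> f_pos[of p] by auto
  have "((\<lambda>t. (L + 1) * h t) \<longlongrightarrow> (L + 1) * 0) at_top" by (intro tendsto_intros h_tendsto_0)
  then have "eventually (\<lambda>t. (L + 1) * h t < f p / 2) at_top"
    using \<open>f p > 0\<close> by (intro order_tendstoD) auto
  with g_eventually_le_h M eventually_gt_at_top[of 0]
  have "eventually (\<lambda>t. g t < f p / 2 \<and> x t \<le> M \<and> t > 0) at_top"
    by eventually_elim auto
  then obtain T where T: "\<And>t. t \<ge> T \<Longrightarrow> g t < f p / 2 \<and> x t \<le> M \<and> t > 0"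
    by (auto simp: eventually_at_top_linorder)
  \<comment> \<open>Above level \<open>a\<close> the drift \<open>- f (x t)\<close> beats the forcing by at least \<open>f p / 2\<close>.\<close>
  have "eventually (\<lambda>t. x t - a < 0) at_top"
  proof (rule eventually_negative_barrier[where c="f p / 2" and T=T and w'="\<lambda>t. - f (x t) + g t"])
    show "f p / 2 > 0" using \<open>f p > 0\<close> by simp
    show "((\<lambda>t. x t - a) has_real_derivative - f (x t) + g t) (at t)" if "T \<le> t" for t
      using DERIV_diff[OF x_ode DERIV_const, of t a] T[OF that] by simp
    show "- f (x t) + g t \<le> - (f p / 2)" if "T \<le> t" "0 \<le> x t - a" for t
      using p(2)[of "x t"] T[OF that(1)] that(2) by auto
  qed
  then show "eventually (\<lambda>t. x t < a) at_top" by simp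
qed

lemma Fint_x_at_top: "filterlim (\<lambda>t. Fint f (x t)) at_top at_top"
proof -
  have "filterlim x (at_right 0) at_top"
  proof (rule tendsto_imp_filterlim_at_right[OF x_tendsto_0])
    show "eventually (\<lambda>t. x t > 0) at_top"
      using eventually_ge_at_top[of 0] by eventually_elim (rule x_pos)
  qed
  then show ?thesis by (rule filterlim_compose[OF Fint_at_right_0])
qed

lemma Fint_x_has_derivative:
  assumes "t > 0"
  shows "((\<lambda>t. Fint f (x t)) has_real_derivative 1 - g t / f (x t)) (at t)"
proof -
  have "f (x t) > 0" using f_pos x_pos assms by simp
  have "((\<lambda>t. Fint f (x t)) has_real_derivative - (1 / f (x t)) * (- f (x t) + g t)) (at t)"
    using assms x_pos by (intro DERIV_chain2[OF Fint_has_derivative x_ode]) auto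
  moreover have "- (1 / f (x t)) * (- f (x t) + g t) = 1 - g t / f (x t)"
    using \<open>f (x t) > 0\<close> by (simp add: field_simps)
  ultimately show ?thesis by simp
qed

lemma g_div_h_scaled_tendsto:
  assumes "\<mu> > 0" and h_RV: "((\<lambda>t. h (\<mu> * t) / h t) \<longlongrightarrow> \<mu> powr (- \<rho>)) at_top"
  shows "((\<lambda>t. g t / h (\<mu> * t)) \<longlongrightarrow> L * \<mu> powr \<rho>) at_top"
proof -
  have "((\<lambda>t. (g t / h t) / (h (\<mu> * t) / h t)) \<longlongrightarrow> L / \<mu> powr (- \<rho>)) at_top"
    using assms by (intro tendsto_divide g_lim h_RV) auto
  moreover have "eventually (\<lambda>t. (g t / h t) / (h (\<mu> * t) / h t) = g t / h (\<mu> * t)) at_top"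
    using eventually_ge_at_top[of 0]
  proof eventually_elim
    case (elim t)
    then show ?case using h_pos[of t] by simp
  qed
  ultimately show ?thesis
    using \<open>\<mu> > 0\<close> by (simp add: Lim_transform_eventually powr_minus divide_inverse)
qed

lemma g_div_f_x_gt_if_ahead:
  assumes "\<mu> > 0" and lim: "((\<lambda>t. g t / h (\<mu> * t)) \<longlongrightarrow> A) at_top" and "0 < B" "B < A"
  shows "eventually (\<lambda>t. \<mu> * t \<le> Fint f (x t) \<longrightarrow> B < g t / f (x t)) at_top"
proof -
  define K where "K = sqrt (A / B)"
  have K: "K > 1" "K * K * B = A" using assms by (auto simp: K_def)
  obtain d where d: "d > 0" "\<And>a b. 0 < a \<Longrightarrow> a \<le> b \<Longrightarrow> b < d \<Longrightarrow> f a \<le> K * f b"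
    using quasi_increasing_at_0D[OF f_quasi_increasing K(1)] by blast
  have "eventually (\<lambda>t. K * B < g t / h (\<mu> * t)) at_top"
    using lim K \<open>0 < B\<close> by (intro order_tendstoD) (auto simp: mult.assoc[symmetric])
  moreover have "eventually (\<lambda>t. Finv f (\<mu> * t) < d) at_top"
    using Finv_scaled_at_top[OF \<open>\<mu> > 0\<close>] d(1) by (auto simp: filterlim_at intro: order_tendstoD)
  ultimately show ?thesis using eventually_gt_at_top[of 0]
  proof eventually_elim
    case (elim t)
    show ?case
    proof
      assume "\<mu> * t \<le> Fint f (x t)"
      then have "x t \<le> Finv f (\<mu> * t)"
        using Finv_antimono[of "\<mu> * t" "Fint f (x t)"] Finv_Fint x_pos elim \<open>\<mu> > 0\<close> by simp
      then have "f (x t) \<le> K * h (\<mu> * t)" using d(2) x_pos elim by simp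
      moreover have "0 < f (x t)" "0 < h (\<mu> * t)" "0 < g t"
        using f_pos x_pos h_pos g_pos elim \<open>\<mu> > 0\<close> by auto
      ultimately have "g t / (K * h (\<mu> * t)) \<le> g t / f (x t)"
        by (intro divide_left_mono) auto
      moreover have "B < g t / (K * h (\<mu> * t))"
        using elim K \<open>0 < h (\<mu> * t)\<close> by (simp add: field_simps)
      ultimately show "B < g t / f (x t)" by simp
    qed
  qed
qed

lemma g_div_f_x_lt_if_behind:
  assumes "\<mu> > 0" and lim: "((\<lambda>t. g t / h (\<mu> * t)) \<longlongrightarrow> A) at_top" and "0 < A" "A < B"
  shows "eventually (\<lambda>t. Fint f (x t) \<le> \<mu> * t \<longrightarrow> g t / f (x t) < B) at_top"
proof -
  define K where "K = sqrt (B / A)"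
  have K: "K > 1" "K * K * A = B" using assms by (auto simp: K_def)
  obtain d where d: "d > 0" "\<And>a b. 0 < a \<Longrightarrow> a \<le> b \<Longrightarrow> b < d \<Longrightarrow> f a \<le> K * f b"
    using quasi_increasing_at_0D[OF f_quasi_increasing K(1)] by blast
  have "eventually (\<lambda>t. g t / h (\<mu> * t) < K * A) at_top"
    using lim K \<open>0 < A\<close> by (intro order_tendstoD) auto
  moreover have "eventually (\<lambda>t. x t < d) at_top"
    using x_tendsto_0 d(1) by (rule order_tendstoD)
  moreover have "eventually (\<lambda>t. Fint f (x t) \<ge> 0) at_top"
    using Fint_x_at_top by (simp add: filterlim_at_top)
  ultimately show ?thesis using eventually_gt_at_top[of 0]
  proof eventually_elim
    case (elim t)
    show ?case
    proof
      assume "Fint f (x t) \<le> \<mu> * t"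
      then have "Finv f (\<mu> * t) \<le> x t"
        using Finv_antimono[of "Fint f (x t)" "\<mu> * t"] Finv_Fint x_pos elim by simp
      then have "h (\<mu> * t) \<le> K * f (x t)" using d(2) Finv_pos elim \<open>\<mu> > 0\<close> by simp
      moreover have "0 < f (x t)" "0 < h (\<mu> * t)" "0 < g t"
        using f_pos x_pos h_pos g_pos elim \<open>\<mu> > 0\<close> by auto
      ultimately have "g t / f (x t) \<le> K * (g t / h (\<mu> * t))"
        by (simp add: field_simps mult_left_mono)
      also have "\<dots> < K * (K * A)" using elim K by (intro mult_strict_left_mono) auto
      also have "\<dots> = B" using K(2) by (simp add: mult.assoc)
      finally show "g t / f (x t) < B" .
    qed
  qed
qed

lemma Fint_x_eventually_less:
  assumes "\<mu> > 0" and lim: "((\<lambda>t. g t / h (\<mu> * t)) \<longlongrightarrow> A) at_top" and "0 < A" "1 < \<mu> + A"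
  shows "eventually (\<lambda>t. Fint f (x t) < \<mu> * t) at_top"
proof -
  define B where "B = max ((1 - \<mu> + A) / 2) (A / 2)"
  have B: "0 < B" "B < A" "1 - \<mu> < B" using assms by (auto simp: B_def less_max_iff_disj)
  have "eventually (\<lambda>t. (\<mu> * t \<le> Fint f (x t) \<longrightarrow> B < g t / f (x t)) \<and> t > 0) at_top"
    using g_div_f_x_gt_if_ahead[OF \<open>\<mu> > 0\<close> lim B(1,2)] eventually_gt_at_top[of 0]
    by eventually_elim auto
  then obtain T where T: "\<And>t. t \<ge> T \<Longrightarrow> (\<mu> * t \<le> Fint f (x t) \<longrightarrow> B < g t / f (x t)) \<and> t > 0"
    by (auto simp: eventually_at_top_linorder)
  have "eventually (\<lambda>t. Fint f (x t) - \<mu> * t < 0) at_top"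
  proof (rule eventually_negative_barrier[where c="B - (1 - \<mu>)" and T=T])
    show "B - (1 - \<mu>) > 0" using B by simp
    show "((\<lambda>t. Fint f (x t) - \<mu> * t) has_real_derivative 1 - g t / f (x t) - \<mu>) (at t)"
      if "T \<le> t" for t
      using T[OF that] by (intro DERIV_diff DERIV_cmult_Id Fint_x_has_derivative) auto
    show "1 - g t / f (x t) - \<mu> \<le> - (B - (1 - \<mu>))" if "T \<le> t" "0 \<le> Fint f (x t) - \<mu> * t" for t
      using T[OF that(1)] that(2) by auto
  qed
  then show ?thesis by simp
qed

lemma Fint_x_eventually_greater:
  assumes "\<mu> > 0" and lim: "((\<lambda>t. g t / h (\<mu> * t)) \<longlongrightarrow> A) at_top" and "0 < A" "\<mu> + A < 1"
  shows "eventually (\<lambda>t. \<mu> * t < Fint f (x t)) at_top"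
proof -
  define B where "B = (1 - \<mu> + A) / 2"
  have B: "A < B" "B < 1 - \<mu>" using assms by (auto simp: B_def)
  have "eventually (\<lambda>t. (Fint f (x t) \<le> \<mu> * t \<longrightarrow> g t / f (x t) < B) \<and> t > 0) at_top"
    using g_div_f_x_lt_if_behind[OF \<open>\<mu> > 0\<close> lim \<open>0 < A\<close> B(1)] eventually_gt_at_top[of 0]
    by eventually_elim auto
  then obtain T where T: "\<And>t. t \<ge> T \<Longrightarrow> (Fint f (x t) \<le> \<mu> * t \<longrightarrow> g t / f (x t) < B) \<and> t > 0"
    by (auto simp: eventually_at_top_linorder)
  have "eventually (\<lambda>t. \<mu> * t - Fint f (x t) < 0) at_top"
  proof (rule eventually_negative_barrier[where c="1 - \<mu> - B" and T=T])
    show "1 - \<mu> - B > 0" using B by simp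
    show "((\<lambda>t. \<mu> * t - Fint f (x t)) has_real_derivative \<mu> - (1 - g t / f (x t))) (at t)"
      if "T \<le> t" for t
      using T[OF that] by (intro DERIV_diff DERIV_cmult_Id Fint_x_has_derivative) auto
    show "\<mu> - (1 - g t / f (x t)) \<le> - (1 - \<mu> - B)" if "T \<le> t" "0 \<le> \<mu> * t - Fint f (x t)" for t
      using T[OF that(1)] that(2) by auto
  qed
  then show ?thesis by simp
qed

lemma Fint_x_div_t_tendsto:
  assumes "\<rho> > 0" "\<Lambda> > 0" and \<Lambda>: "\<Lambda> + L * \<Lambda> powr \<rho> = 1"
    and h_RV: "\<And>\<mu>. \<mu> > 0 \<Longrightarrow> ((\<lambda>t. h (\<mu> * t) / h t) \<longlongrightarrow> \<mu> powr (- \<rho>)) at_top"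
  shows "((\<lambda>t. Fint f (x t) / t) \<longlongrightarrow> \<Lambda>) at_top"
proof (rule order_tendstoI)
  fix a assume "a > \<Lambda>"
  then have "1 < a + L * a powr \<rho>"
    using \<Lambda> powr_less_mono2[OF \<open>\<rho> > 0\<close>, of \<Lambda> a] \<open>\<Lambda> > 0\<close> L_pos
    by (smt (verit) mult_strict_left_mono)
  moreover have "((\<lambda>t. g t / h (a * t)) \<longlongrightarrow> L * a powr \<rho>) at_top"
    using \<open>a > \<Lambda>\<close> \<open>\<Lambda> > 0\<close> by (intro g_div_h_scaled_tendsto h_RV) auto
  ultimately have "eventually (\<lambda>t. Fint f (x t) < a * t) at_top"
    using \<open>a > \<Lambda>\<close> \<open>\<Lambda> > 0\<close> L_pos by (intro Fint_x_eventually_less) auto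
  with eventually_gt_at_top[of 0] show "eventually (\<lambda>t. Fint f (x t) / t < a) at_top"
    by eventually_elim (simp add: divide_less_eq)
next
  fix a assume "a < \<Lambda>"
  have "eventually (\<lambda>t. a * t < Fint f (x t)) at_top"
  proof (cases "a > 0")
    case True
    then have "a + L * a powr \<rho> < 1"
      using \<Lambda> powr_less_mono2[OF \<open>\<rho> > 0\<close>, of a \<Lambda>] \<open>a < \<Lambda>\<close> L_pos
      by (smt (verit) mult_strict_left_mono)
    moreover have "((\<lambda>t. g t / h (a * t)) \<longlongrightarrow> L * a powr \<rho>) at_top"
      using True by (intro g_div_h_scaled_tendsto h_RV) auto
    ultimately show ?thesis using True L_pos by (intro Fint_x_eventually_greater) auto
  next
    case False
    have "eventually (\<lambda>t. Fint f (x t) > 0) at_top"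
      using Fint_x_at_top by (simp add: filterlim_at_top_dense)
    with eventually_gt_at_top[of 0] show ?thesis
      by eventually_elim (use False in \<open>smt (verit) mult_nonpos_nonneg\<close>)
  qed
  with eventually_gt_at_top[of 0] show "eventually (\<lambda>t. a < Fint f (x t) / t) at_top"
    by eventually_elim (simp add: less_divide_eq)
qed

lemma Fint_x_div_t_tendsto_RV0:
  assumes "\<beta> > 1" "RV0 f \<beta>"
  shows "((\<lambda>t. Fint f (x t) / t) \<longlongrightarrow>
           (THE \<Lambda>. 0 < \<Lambda> \<and> \<Lambda> < 1 \<and> (1 - \<Lambda>) * \<Lambda> powr (- \<beta> / (\<beta> - 1)) = L)) at_top"
proof -
  define \<rho> where "\<rho> = \<beta> / (\<beta> - 1)"
  have "\<rho> > 0" "- \<beta> / (\<beta> - 1) = - \<rho>" using \<open>\<beta> > 1\<close> by (auto simp: \<rho>_def)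
  define P where "P \<Lambda> \<longleftrightarrow> 0 < \<Lambda> \<and> \<Lambda> < 1 \<and> (1 - \<Lambda>) * \<Lambda> powr (- \<rho>) = L" for \<Lambda>
  have "\<exists>!\<Lambda>. P \<Lambda>" unfolding P_def using L_pos \<open>\<rho> > 0\<close> by (rule ex1_Lambda)
  then have "P (THE \<Lambda>. P \<Lambda>)" by (rule theI')
  then have "((\<lambda>t. Fint f (x t) / t) \<longlongrightarrow> (THE \<Lambda>. P \<Lambda>)) at_top"
    using assms \<open>\<rho> > 0\<close> f_quasi_increasing
    by (intro Fint_x_div_t_tendsto[of \<rho>])
       (auto simp: P_def Lambda_equation_iff \<rho>_def intro: h_ratio_tendsto)
  then show ?thesis unfolding \<open>- \<beta> / (\<beta> - 1) = - \<rho>\<close> P_def .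
qed

end

theorem theorem2:
  fixes f g x \<phi> :: "real \<Rightarrow> real" and \<xi> \<delta> L :: real
  assumes f_cont: "continuous_on UNIV f"
    and f_lip: "loc_lipschitz f"
    and f0: "f 0 = 0"
    and f_sign: "\<And>y. y \<noteq> 0 \<Longrightarrow> y * f y > 0"
    and g_cont: "continuous_on {0..} g"
    and g_pos: "\<And>t. t > 0 \<Longrightarrow> g t > 0"
    and xi_pos: "\<xi> > 0"
    and F_lim: "filterlim (Fint f) at_top (at_right 0)"
    and x_cont: "continuous_on {0..} x"
    and x_init: "x 0 = \<xi>"
    and x_ode: "\<And>t. t > 0 \<Longrightarrow> (x has_real_derivative (- f (x t) + g t)) (at t)"
    and delta_pos: "\<delta> > 0"
    and phi_mono: "mono_on {0<..<\<delta>} \<phi>"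
    and f_phi: "((\<lambda>y. f y / \<phi> y) \<longlongrightarrow> 1) (at_right 0)"
    and L_pos: "L > 0"
    and g_lim: "((\<lambda>t. g t / f (Finv f t)) \<longlongrightarrow> L) at_top"
  shows "(x \<longlongrightarrow> 0) at_top
    \<and> (\<forall>\<beta>. \<beta> > 1 \<and> RV0 f \<beta> \<longrightarrow>
         (\<exists>!\<Lambda>. 0 < \<Lambda> \<and> \<Lambda> < 1 \<and> (1 - \<Lambda>) * \<Lambda> powr (- \<beta> / (\<beta> - 1)) = L)
         \<and> ((\<lambda>t. Fint f (x t) / t) \<longlongrightarrow>
              (THE \<Lambda>. 0 < \<Lambda> \<and> \<Lambda> < 1 \<and> (1 - \<Lambda>) * \<Lambda> powr (- \<beta> / (\<beta> - 1)) = L)) at_top)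
    \<and> (RVinf (\<lambda>t. f (Finv f t)) (-1) \<and> RVinf (Finv f) 0 \<longrightarrow>
         ((\<lambda>t. Fint f (x t) / t) \<longlongrightarrow> 1 / (L + 1)) at_top)"
proof -
  \<comment> \<open>Local Lipschitz continuity of \<open>f\<close> and continuity of \<open>g\<close> only serve the existence and
    uniqueness of \<open>x\<close>, which is assumed.\<close>
  have "f y > 0" if "y > 0" for y using f_sign[of y] that by (simp add: zero_less_mult_iff)
  then have "quasi_increasing_at_0 f"
    by (rule quasi_increasing_at_0_if_asymp_increasing[OF delta_pos phi_mono f_phi])
  then interpret perturbed_decay f g x \<xi> L
    using assms by unfold_locales auto
  have unique_\<Lambda>: "\<exists>!\<Lambda>. 0 < \<Lambda> \<and> \<Lambda> < 1 \<and> (1 - \<Lambda>) * \<Lambda> powr (- \<beta> / (\<beta> - 1)) = L" if "\<beta> > 1" for \<beta>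
    using ex1_Lambda[OF L_pos, of "\<beta> / (\<beta> - 1)"] that unfolding minus_divide_left by simp
  have case_ii: "((\<lambda>t. Fint f (x t) / t) \<longlongrightarrow> 1 / (L + 1)) at_top" if "RVinf h (-1)"
    using that L_pos
    by (intro Fint_x_div_t_tendsto[of 1]) (auto simp: RVinf_def field_simps)
  show ?thesis using x_tendsto_0 unique_\<Lambda> Fint_x_div_t_tendsto_RV0 case_ii by blast
qed

end
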